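(* Suppose that $U=L(0)\otimes A\oplus L(2)\otimes B$. The algebra $\mathrm{Ass}^{\mathrm{TKK}}(U)$ is the quotient of $\mathrm{Ass}(U)$ by the relations given by the $\mathfrak{sl}_2$-submodule in $U^{\otimes 2}$ generated by $(e\otimes B)\otimes T(L(0)\otimes A)\otimes (e\otimes B)$, where $e$ is the highest weight vector of $L(2)$.
   Context: We work over a field $k$ of characteristic zero. For $n\ge 0$, $L(n)$ denotes the irreducible $\mathfrak{sl}_2$-module of highest weight $n$; $L(0)$ is the trivial module and $L(2)$ is the adjoint module $\mathfrak{sl}_2$ with basis $e,f,h$. The category $\mathrm{TKK}$ has as objects the completely reducible $\mathfrak{sl}_2$-modules that are direct sums of copies of $L(0)$ and $L(2)$, i.e. $L(0)\otimes A\oplus L(2)\otimes B$ for multiplicity vector spaces $A,B$, and as morphisms $\mathfrak{sl}_2$-module maps. $\mathrm{Ass}(V)=T(V)$ is the free unital associative (tensor) algebra, and $\mathrm{Ass}^{\mathrm{TKK}}(U)$ is the free unital associative algebra in $\mathrm{TKK}$ generated by $U$ (left adjoint of the forgetful functor from associative algebras in $\mathrm{TKK}$ with $\mathfrak{sl}_2$-equivariant product), which is the quotient of $T(U)$ by the ideal generated by all $\mathfrak{sl}_2$-isotypic components $L(m)$ with $m\neq 0,2$. (The generating submodule lies in $U^{\otimes(s+2)}$ for the various degrees $s$ of the middle factor.) *)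

theory Defs
  imports Main
begin

text \<open>Letters of a basis of U = L(0) (x) A + L(2) (x) B, where A has basis indexed by
  a set I and B has basis indexed by a set J:  Sc i = 1 (x) a_i,  E j = e (x) b_j,
  H j = h (x) b_j,  F j = f (x) b_j.\<close>
datatype ('i, 'j) letter = Sc 'i | E 'j | H 'j | F 'j

datatype sl2 = Eop | Hop | Fop

definition alphabet :: "'i set \<Rightarrow> 'j set \<Rightarrow> ('i, 'j) letter set" where
  "alphabet I J = Sc ` I \<union> E ` J \<union> H ` J \<union> F ` J"

text \<open>Elements of T(U): finitely supported k-valued functions on words over the alphabet
  (coefficients with respect to the basis of tensor monomials).\<close>
definition TU :: "'i set \<Rightarrow> 'j set \<Rightarrow> ((('i, 'j) letter list) \<Rightarrow> 'k::field) set" where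
  "TU I J = {v. finite {w. v w \<noteq> 0} \<and> (\<forall>w. v w \<noteq> 0 \<longrightarrow> set w \<subseteq> alphabet I J)}"

text \<open>Adjoint action of sl2 on letters: coefficient of letter d in X.c.
  [e,e]=0, [e,h]=-2e, [e,f]=h, [h,e]=2e, [h,h]=0, [h,f]=-2f, [f,e]=-h, [f,h]=2f, [f,f]=0;
  trivial action on L(0).\<close>
fun actl :: "sl2 \<Rightarrow> ('i, 'j) letter \<Rightarrow> ('i, 'j) letter \<Rightarrow> 'k::field" where
  "actl Eop (H j) d = (if d = E j then -2 else 0)"
| "actl Eop (F j) d = (if d = H j then 1 else 0)"
| "actl Hop (E j) d = (if d = E j then 2 else 0)"
| "actl Hop (F j) d = (if d = F j then -2 else 0)"
| "actl Fop (E j) d = (if d = H j then -1 else 0)"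
| "actl Fop (H j) d = (if d = F j then 2 else 0)"
| "actl _ _ _ = 0"

text \<open>Action on a tensor monomial w (derivation rule): coefficient of the monomial w'.\<close>
definition actw :: "sl2 \<Rightarrow> ('i, 'j) letter list \<Rightarrow> ('i, 'j) letter list \<Rightarrow> 'k::field" where
  "actw X w w' = (\<Sum>i<length w.
     if length w' = length w \<and> take i w' = take i w \<and> drop (Suc i) w' = drop (Suc i) w
     then actl X (w ! i) (w' ! i) else 0)"

definition act :: "sl2 \<Rightarrow> (('i, 'j) letter list \<Rightarrow> 'k::field) \<Rightarrow> (('i, 'j) letter list \<Rightarrow> 'k)" where
  "act X v = (\<lambda>w'. \<Sum>w\<in>{w. v w \<noteq> 0}. v w * actw X w w')"

definition act_seq :: "sl2 list \<Rightarrow> (('i, 'j) letter list \<Rightarrow> 'k::field) \<Rightarrow> (('i, 'j) letter list \<Rightarrow> 'k)" where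
  "act_seq xs v = foldr act xs v"

definition lspan :: "(('a \<Rightarrow> 'k::field)) set \<Rightarrow> ('a \<Rightarrow> 'k) set" where
  "lspan S = {v. \<exists>G c. finite G \<and> G \<subseteq> S \<and> v = (\<lambda>w. \<Sum>g\<in>G. c g * g w)}"

definition submod_gen :: "(('i, 'j) letter list \<Rightarrow> 'k::field) set \<Rightarrow> (('i, 'j) letter list \<Rightarrow> 'k) set" where
  "submod_gen S = lspan {act_seq xs s | xs s. s \<in> S}"

text \<open>The product u * s * v in T(U) for monomials u, v.\<close>
definition sandwich :: "'a list \<Rightarrow> 'a list \<Rightarrow> ('a list \<Rightarrow> 'k::field) \<Rightarrow> ('a list \<Rightarrow> 'k)" where
  "sandwich u v s = (\<lambda>w. if length u + length v \<le> length w \<and> take (length u) w = u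
       \<and> drop (length w - length v) w = v
     then s (drop (length u) (take (length w - length v) w)) else 0)"

definition ideal_gen :: "'i set \<Rightarrow> 'j set \<Rightarrow> (('i, 'j) letter list \<Rightarrow> 'k::field) set
    \<Rightarrow> (('i, 'j) letter list \<Rightarrow> 'k) set" where
  "ideal_gen I J S = lspan {sandwich u v s | u v s.
      set u \<subseteq> alphabet I J \<and> set v \<subseteq> alphabet I J \<and> s \<in> S}"

text \<open>Sum of all isotypic components L(m), m \<noteq> 0, 2, of T(U): spanned by the
  submodules generated by highest weight vectors of weight m, i.e. by the f^k v.\<close>
definition bad_isotypic :: "'i set \<Rightarrow> 'j set \<Rightarrow> (('i, 'j) letter list \<Rightarrow> 'k::field) set" where
  "bad_isotypic I J = lspan {act_seq (replicate n Fop) v | n v m.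
      v \<in> TU I J \<and> m \<noteq> 0 \<and> m \<noteq> (2::nat) \<and>
      act Eop v = (\<lambda>w. 0) \<and> act Hop v = (\<lambda>w. of_nat m * v w)}"

definition mono :: "'a list \<Rightarrow> ('a list \<Rightarrow> 'k::field)" where
  "mono u = (\<lambda>w. if w = u then 1 else 0)"

text \<open>(e (x) B) (x) T(L(0) (x) A) (x) (e (x) B), as a set of spanning monomials.\<close>
definition eBTAeB :: "'i set \<Rightarrow> 'j set \<Rightarrow> (('i, 'j) letter list \<Rightarrow> 'k::field) set" where
  "eBTAeB I J = {mono ([E j] @ map Sc is @ [E j']) | j is j'.
      j \<in> J \<and> j' \<in> J \<and> set is \<subseteq> I}"

end

theory Submission
  imports Defs
begin

text \<open>The monomials of \<open>T(U)\<close> are weight vectors: \<open>h\<close> acts on a word \<open>w\<close> by \<open>2 * half_weight w\<close>,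
  where \<open>half_weight w\<close> counts the letters \<open>e \<otimes> b\<close> minus the letters \<open>f \<otimes> b\<close>. A vector of weight
  \<open>m \<noteq> 0, 2\<close> is therefore a combination of words of half weight at least 2, and every such
  word lies in the ideal \<open>R\<close> generated by the submodule of \<open>e b \<otimes> a\<^sub>1 \<otimes> \<dots> \<otimes> a\<^sub>k \<otimes> e b'\<close>: by
  induction on the length, either a proper suffix already has half weight at least 2, or the
  word starts with \<open>e b \<otimes> a\<^sub>1 \<otimes> \<dots> \<otimes> a\<^sub>k \<otimes> z\<close>, \<open>z \<in> {e, h, f} \<otimes> B\<close>, and the generator together
  with its images under \<open>f\<close> and \<open>f\<^sup>2\<close> rewrites the word modulo \<open>R\<close> into words whose tails have
  half weight at least 2. Since \<open>sl\<^sub>2\<close> acts by derivations, \<open>R\<close> is a submodule, so it also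
  contains the \<open>f\<^sup>n\<close>-images of these vectors. Conversely each generator is a highest weight
  vector of weight 4, so the submodule it generates is spanned by its \<open>f\<^sup>n\<close>-images and lies in
  the \<open>L(4)\<close>-component.\<close>

definition finsupp :: "('a \<Rightarrow> 'k::zero) \<Rightarrow> bool" where
  "finsupp v \<longleftrightarrow> finite {w. v w \<noteq> 0}"

lemma finsupp_mono: "finsupp (mono u :: _ \<Rightarrow> 'k::field)"
  unfolding finsupp_def mono_def by simp

lemma fun_eq_sum_mono:
  fixes v :: "'a list \<Rightarrow> 'k::field"
  assumes "finite S" "{w. v w \<noteq> 0} \<subseteq> S"
  shows "v = (\<lambda>x. \<Sum>w\<in>S. v w * mono w x)"
proof
  fix x
  have "(\<Sum>w\<in>S. v w * mono w x) = (\<Sum>w\<in>S. if x = w then v x else 0)"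
    by (rule sum.cong) (auto simp: mono_def)
  also have "\<dots> = v x"
    using assms by (auto simp: sum.delta)
  finally show "v x = (\<Sum>w\<in>S. v w * mono w x)" by simp
qed

lemma lspan_zero: "(\<lambda>w. 0) \<in> lspan B"
  unfolding lspan_def by (intro CollectI exI[of _ "{}"]) auto

lemma lspan_base: "b \<in> B \<Longrightarrow> b \<in> lspan B"
  unfolding lspan_def by (intro CollectI exI[of _ "{b}"] exI[of _ "\<lambda>_. 1"]) auto

lemma lspan_scale: "v \<in> lspan B \<Longrightarrow> (\<lambda>w. a * v w) \<in> lspan B"
proof -
  assume "v \<in> lspan B"
  then obtain G c where "finite G" "G \<subseteq> B" "v = (\<lambda>w. \<Sum>g\<in>G. c g * g w)"
    unfolding lspan_def by auto
  then show ?thesis unfolding lspan_def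
    by (intro CollectI exI[of _ G] exI[of _ "\<lambda>g. a * c g"]) (auto simp: sum_distrib_left mult.assoc)
qed

lemma lspan_add: "v \<in> lspan B \<Longrightarrow> u \<in> lspan B \<Longrightarrow> (\<lambda>w. v w + u w) \<in> lspan B"
proof -
  assume "v \<in> lspan B" "u \<in> lspan B"
  then obtain G c G' c' where G: "finite G" "G \<subseteq> B" "v = (\<lambda>w. \<Sum>g\<in>G. c g * g w)"
    and G': "finite G'" "G' \<subseteq> B" "u = (\<lambda>w. \<Sum>g\<in>G'. c' g * g w)"
    unfolding lspan_def by blast
  define d where "d g = (if g \<in> G then c g else 0) + (if g \<in> G' then c' g else 0)" for g
  have "v w + u w = (\<Sum>g\<in>G \<union> G'. d g * g w)" for w
  proof -
    have "(\<Sum>g\<in>G \<union> G'. d g * g w)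
        = (\<Sum>g\<in>G \<union> G'. if g \<in> G then c g * g w else 0) + (\<Sum>g\<in>G \<union> G'. if g \<in> G' then c' g * g w else 0)"
      by (simp add: d_def distrib_right sum.distrib if_distrib[of "\<lambda>x. x * _"] cong: if_cong)
    also have "\<dots> = v w + u w"
      using G G' by (simp add: sum.inter_restrict[symmetric] Int_absorb1 Int_absorb2)
    finally show ?thesis by simp
  qed
  then show ?thesis
    unfolding lspan_def using G G' by (intro CollectI exI[of _ "G \<union> G'"] exI[of _ d]) auto
qed

lemma lspan_diff: "v \<in> lspan B \<Longrightarrow> u \<in> lspan B \<Longrightarrow> (\<lambda>w. v w - u w) \<in> lspan B"
  using lspan_add[of v B "\<lambda>w. -1 * u w"] lspan_scale[of u B "-1"] by simp

lemma lspan_sum: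
  "finite A \<Longrightarrow> (\<And>a. a \<in> A \<Longrightarrow> f a \<in> lspan B) \<Longrightarrow> (\<lambda>w. \<Sum>a\<in>A. c a * f a w) \<in> lspan B"
proof (induction A rule: finite_induct)
  case empty
  then show ?case by (simp add: lspan_zero)
next
  case (insert x F)
  then show ?case
    using lspan_add[OF lspan_scale[of "f x" B "c x"], of "\<lambda>w. \<Sum>a\<in>F. c a * f a w"] by simp
qed

lemma lspan_subset_lspan: "A \<subseteq> lspan B \<Longrightarrow> lspan A \<subseteq> lspan B"
proof
  fix v assume "A \<subseteq> lspan B" "v \<in> lspan A"
  then obtain G c where "finite G" "G \<subseteq> A" "v = (\<lambda>w. \<Sum>g\<in>G. c g * g w)"
    unfolding lspan_def by auto
  then show "v \<in> lspan B"
    using lspan_sum[of G "\<lambda>g. g" B c] \<open>A \<subseteq> lspan B\<close> by auto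
qed

lemma finsupp_sum:
  fixes c :: "_ \<Rightarrow> 'k::field"
  assumes "finite G" "\<forall>g\<in>G. finsupp g"
  shows "finsupp (\<lambda>w. \<Sum>g\<in>G. c g * g w)"
proof -
  have "{w. (\<Sum>g\<in>G. c g * g w) \<noteq> 0} \<subseteq> (\<Union>g\<in>G. {w. g w \<noteq> 0})"
  proof
    fix w assume "w \<in> {w. (\<Sum>g\<in>G. c g * g w) \<noteq> 0}"
    then show "w \<in> (\<Union>g\<in>G. {w. g w \<noteq> 0})"
      by (auto elim!: sum.not_neutral_contains_not_neutral[where g = "\<lambda>g. c g * g w"])
  qed
  then show ?thesis
    using assms unfolding finsupp_def by (auto intro: finite_subset)
qed

lemma finsupp_lspan: "\<forall>b\<in>B. finsupp (b :: _ \<Rightarrow> 'k::field) \<Longrightarrow> v \<in> lspan B \<Longrightarrow> finsupp v"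
  unfolding lspan_def by (auto intro!: finsupp_sum)

section \<open>The action of sl2 on T(U)\<close>

lemma actw_eq_0_if_length_neq: "length w' \<noteq> length w \<Longrightarrow> actw X w w' = 0"
  unfolding actw_def by simp

lemma actw_Nil: "actw X [] w' = 0"
  unfolding actw_def by simp

lemma actw_Nil_right: "actw X w [] = 0"
  by (cases w) (simp_all add: actw_Nil actw_eq_0_if_length_neq)

lemma sum_lessThan_add: "(\<Sum>i<(n::nat) + m. f i) = (\<Sum>i<n. f i) + (\<Sum>i<m. f (n + i))"
  by (induction m) (auto simp: add.assoc)

lemma actw_append:
  assumes "length a' = length a"
  shows "(actw X (a @ b) (a' @ b') :: 'k::field) =
    (if b' = b then actw X a a' else 0) + (if a' = a then actw X b b' else 0)"
proof (cases "length b' = length b")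
  case False
  then show ?thesis using assms by (auto simp: actw_eq_0_if_length_neq)
next
  case True
  define f where "f i = (if take i (a' @ b') = take i (a @ b) \<and> drop (Suc i) (a' @ b') = drop (Suc i) (a @ b)
     then actl X ((a @ b) ! i) ((a' @ b') ! i) else 0 :: 'k)" for i
  have "actw X (a @ b) (a' @ b') = (\<Sum>i<length a. f i) + (\<Sum>i<length b. f (length a + i))"
    unfolding actw_def f_def using assms True by (simp add: sum_lessThan_add)
  also have "(\<Sum>i<length a. f i) = (if b' = b then actw X a a' else 0)"
  proof -
    have "f i = (if b' = b then (if take i a' = take i a \<and> drop (Suc i) a' = drop (Suc i) a
        then actl X (a ! i) (a' ! i) else 0) else 0)" if "i < length a" for i
      using that assms by (auto simp: f_def nth_append)
    then show ?thesis
      unfolding actw_def using assms by (auto intro: sum.cong)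
  qed
  also have "(\<Sum>i<length b. f (length a + i)) = (if a' = a then actw X b b' else 0)"
  proof -
    have "f (length a + i) = (if a' = a then (if take i b' = take i b \<and> drop (Suc i) b' = drop (Suc i) b
        then actl X (b ! i) (b' ! i) else 0) else 0)" if "i < length b" for i
      using that assms True by (auto simp: f_def nth_append)
    then show ?thesis
      unfolding actw_def using True by (auto intro: sum.cong)
  qed
  finally show ?thesis .
qed

lemma actw_singleton: "actw X [c] [d] = actl X c d"
  unfolding actw_def by simp

lemma actw_Cons_Cons:
  "(actw X (c # m) (d # w) :: 'k::field) =
    (if w = m then actl X c d else 0) + (if d = c then actw X m w else 0)"
proof -
  have "(actw X ([c] @ m) ([d] @ w) :: 'k) =
      (if w = m then actw X [c] [d] else 0) + (if [d] = [c] then actw X m w else 0)"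
    by (rule actw_append) simp
  then show ?thesis by (simp only: actw_singleton append_Cons append_Nil list.inject simp_thms)
qed

lemma actw_snoc_snoc:
  "(actw X (m @ [c]) (w @ [d]) :: 'k::field) =
    (if w = m then actl X c d else 0) + (if d = c then actw X m w else 0)"
proof (cases "length w = length m")
  case True
  then have "(actw X (m @ [c]) (w @ [d]) :: 'k) =
      (if [d] = [c] then actw X m w else 0) + (if w = m then actw X [c] [d] else 0)"
    by (rule actw_append)
  then show ?thesis by (simp only: actw_singleton list.inject simp_thms add.commute)
next
  case False
  then show ?thesis by (auto simp: actw_eq_0_if_length_neq)
qed

lemma actw_map_Sc: "actw X (map Sc ks) w = 0"
proof (induction ks arbitrary: w)
  case Nil
  then show ?case by (simp add: actw_Nil)
next
  case (Cons i ks)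
  then show ?case
    by (cases w) (auto simp: actw_Cons_Cons actw_Nil_right elim: actl.elims)
qed

fun act_targets :: "('i, 'j) letter \<Rightarrow> ('i, 'j) letter list" where
  "act_targets (Sc i) = []"
| "act_targets (E j) = [E j, H j]"
| "act_targets (H j) = [E j, F j]"
| "act_targets (F j) = [H j, F j]"

lemma actl_eq_0_if_not_target: "d \<notin> set (act_targets c) \<Longrightarrow> actl X c d = 0"
  by (cases X; cases c) auto

lemma act_targets_alphabet: "c \<in> alphabet I J \<Longrightarrow> d \<in> set (act_targets c) \<Longrightarrow> d \<in> alphabet I J"
  by (cases c) (auto simp: alphabet_def)

lemma sum_act_targets:
  "(\<Sum>d'\<in>set (act_targets c). actl X c d' * (if d = d' then a else 0)) = (actl X c d * a :: 'k::field)"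
  by (cases "d \<in> set (act_targets c)")
    (auto simp: actl_eq_0_if_not_target if_distrib[of "\<lambda>x. _ * x"] cong: if_cong intro: sum.neutral)

lemma finite_actw_support: "finite {w'. (actw X w w' :: 'k::field) \<noteq> 0}"
proof (induction w)
  case Nil
  then show ?case by (simp add: actw_Nil)
next
  case (Cons c m)
  have "{w'. (actw X (c # m) w' :: 'k) \<noteq> 0}
      \<subseteq> (\<lambda>d. d # m) ` set (act_targets c) \<union> Cons c ` {w'. (actw X m w' :: 'k) \<noteq> 0}"
  proof
    fix w' assume "w' \<in> {w'. (actw X (c # m) w' :: 'k) \<noteq> 0}"
    then obtain d w where w': "w' = d # w" "(actw X (c # m) (d # w) :: 'k) \<noteq> 0"
      by (cases w') (auto simp: actw_Nil_right)
    then have "actl X c d \<noteq> (0 :: 'k) \<and> w = m \<or> d = c \<and> (actw X m w :: 'k) \<noteq> 0"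
      by (auto simp: actw_Cons_Cons split: if_splits)
    then show "w' \<in> (\<lambda>d. d # m) ` set (act_targets c) \<union> Cons c ` {w'. (actw X m w' :: 'k) \<noteq> 0}"
      using w'(1) actl_eq_0_if_not_target[of d c X] by auto
  qed
  then show ?case
    by (rule finite_subset) (use Cons.IH in simp)
qed

lemma act_eq_sum_superset:
  assumes "finite S" "{w. v w \<noteq> 0} \<subseteq> S"
  shows "act X v w' = (\<Sum>w\<in>S. v w * actw X w w')"
  unfolding act_def by (rule sum.mono_neutral_left) (use assms in auto)

lemma act_sum:
  fixes c :: "_ \<Rightarrow> 'k::field"
  assumes G: "finite G" "\<forall>g\<in>G. finsupp g"
  shows "act X (\<lambda>w. \<Sum>g\<in>G. c g * g w) = (\<lambda>w'. \<Sum>g\<in>G. c g * act X g w')"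
proof
  fix w'
  define S where "S = (\<Union>g\<in>G. {w. g w \<noteq> 0})"
  have S: "finite S" "\<forall>g\<in>G. {w. g w \<noteq> 0} \<subseteq> S"
    using G unfolding S_def finsupp_def by auto
  have "{w. (\<Sum>g\<in>G. c g * g w) \<noteq> 0} \<subseteq> S"
  proof
    fix w assume "w \<in> {w. (\<Sum>g\<in>G. c g * g w) \<noteq> 0}"
    then show "w \<in> S"
      unfolding S_def by (auto elim!: sum.not_neutral_contains_not_neutral[where g = "\<lambda>g. c g * g w"])
  qed
  then have "act X (\<lambda>w. \<Sum>g\<in>G. c g * g w) w' = (\<Sum>w\<in>S. (\<Sum>g\<in>G. c g * g w) * actw X w w')"
    by (rule act_eq_sum_superset[OF S(1)])
  also have "\<dots> = (\<Sum>w\<in>S. \<Sum>g\<in>G. c g * (g w * actw X w w'))"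
    by (simp add: sum_distrib_right mult.assoc)
  also have "\<dots> = (\<Sum>g\<in>G. c g * (\<Sum>w\<in>S. g w * actw X w w'))"
    by (subst sum.swap) (simp add: sum_distrib_left)
  also have "\<dots> = (\<Sum>g\<in>G. c g * act X g w')"
    using S by (simp add: act_eq_sum_superset)
  finally show "act X (\<lambda>w. \<Sum>g\<in>G. c g * g w) w' = (\<Sum>g\<in>G. c g * act X g w')" .
qed

lemma finsupp_act: "finsupp (v :: _ \<Rightarrow> 'k::field) \<Longrightarrow> finsupp (act X v)"
proof -
  assume "finsupp v"
  have "{w'. act X v w' \<noteq> 0} \<subseteq> (\<Union>w\<in>{w. v w \<noteq> 0}. {w'. (actw X w w' :: 'k) \<noteq> 0})"
  proof
    fix w' assume "w' \<in> {w'. act X v w' \<noteq> 0}"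
    then show "w' \<in> (\<Union>w\<in>{w. v w \<noteq> 0}. {w'. (actw X w w' :: 'k) \<noteq> 0})"
      unfolding act_def by (auto elim!: sum.not_neutral_contains_not_neutral[where g = "\<lambda>w. v w * actw X w w'"])
  qed
  moreover have "finite (\<Union>w\<in>{w. v w \<noteq> 0}. {w'. (actw X w w' :: 'k) \<noteq> 0})"
    using \<open>finsupp v\<close> finite_actw_support unfolding finsupp_def by blast
  ultimately show ?thesis
    unfolding finsupp_def by (rule finite_subset)
qed

lemma finsupp_act_seq: "finsupp (v :: _ \<Rightarrow> 'k::field) \<Longrightarrow> finsupp (act_seq xs v)"
  by (induction xs) (auto simp: act_seq_def finsupp_act)

lemma act_seq_Cons: "act_seq (X # xs) v = act X (act_seq xs v)"
  by (simp add: act_seq_def)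

lemma act_lspan:
  assumes "\<forall>b\<in>B. finsupp (b :: _ \<Rightarrow> 'k::field)" "\<forall>b\<in>B. act X b \<in> lspan C" "x \<in> lspan B"
  shows "act X x \<in> lspan C"
proof -
  obtain G c where G: "finite G" "G \<subseteq> B" "x = (\<lambda>w. \<Sum>g\<in>G. c g * g w)"
    using assms(3) unfolding lspan_def by blast
  then have "act X x = (\<lambda>w. \<Sum>g\<in>G. c g * act X g w)"
    using G assms(1) by (simp add: act_sum subset_iff)
  also have "\<dots> \<in> lspan C"
    using G assms(2) by (intro lspan_sum) auto
  finally show ?thesis .
qed

section \<open>Two-sided ideals and their stability under sl2\<close>

lemma sandwich_append: "sandwich u v s (u @ m @ v) = s m"
  unfolding sandwich_def by simp

lemma sandwich_eq_0:
  assumes "\<And>m. w \<noteq> u @ m @ v"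
  shows "sandwich u v s w = 0"
proof (rule ccontr)
  assume "sandwich u v s w \<noteq> 0"
  then have w: "length u + length v \<le> length w" "take (length u) w = u"
      "drop (length w - length v) w = v"
    unfolding sandwich_def by (auto split: if_splits)
  define m where "m = drop (length u) (take (length w - length v) w)"
  have "take (length w - length v) w = take (length u) (take (length w - length v) w) @ m"
    unfolding m_def by (rule append_take_drop_id[symmetric])
  also have "take (length u) (take (length w - length v) w) = u"
    using w(1,2) by (simp add: min_absorb1)
  finally have "w = u @ m @ v"
    using w(3) by (metis append_assoc append_take_drop_id)
  then show False
    using assms by blast
qed

lemma sandwich_Nil_Nil: "sandwich [] [] s = s"
  unfolding sandwich_def by simp

lemma sandwich_sandwich: "sandwich u v (sandwich u' v' s) = sandwich (u @ u') (v' @ v) s"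
proof
  fix w
  consider m where "w = u @ (u' @ m @ v') @ v"
    | m where "w = u @ m @ v" "\<And>m'. m \<noteq> u' @ m' @ v'"
    | "\<And>m. w \<noteq> u @ m @ v"
    by (metis append.assoc)
  then show "sandwich u v (sandwich u' v' s) w = sandwich (u @ u') (v' @ v) s w"
  proof cases
    case (1 m)
    then have "sandwich u v (sandwich u' v' s) w = s m"
      by (simp only: sandwich_append)
    moreover have "sandwich (u @ u') (v' @ v) s w = s m"
      using 1 sandwich_append[of "u @ u'" "v' @ v" s m] by simp
    ultimately show ?thesis by simp
  next
    case (2 m)
    then show ?thesis
      by (simp add: sandwich_append sandwich_eq_0)
  next
    case 3
    then have "sandwich u v (sandwich u' v' s) w = 0"
      by (rule sandwich_eq_0)
    moreover have "sandwich (u @ u') (v' @ v) s w = 0"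
      by (rule sandwich_eq_0) (metis 3 append.assoc)
    ultimately show ?thesis by simp
  qed
qed

lemma sandwich_sum: "sandwich u v (\<lambda>w. \<Sum>g\<in>G. c g * g w) = (\<lambda>w. \<Sum>g\<in>G. c g * sandwich u v g w)"
proof
  fix w
  show "sandwich u v (\<lambda>w. \<Sum>g\<in>G. c g * g w) w = (\<Sum>g\<in>G. c g * sandwich u v g w)"
    by (cases "\<exists>m. w = u @ m @ v") (auto simp: sandwich_append sandwich_eq_0)
qed

lemma sandwich_mono: "sandwich u v (mono m) = mono (u @ m @ v)"
proof
  fix w
  show "sandwich u v (mono m) w = mono (u @ m @ v) w"
    by (cases "\<exists>m. w = u @ m @ v") (auto simp: sandwich_append sandwich_eq_0 mono_def split: if_splits)
qed

lemma finsupp_sandwich: "finsupp s \<Longrightarrow> finsupp (sandwich u v s)"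
proof -
  assume "finsupp s"
  have "{w. sandwich u v s w \<noteq> 0} \<subseteq> (\<lambda>m. u @ m @ v) ` {w. s w \<noteq> 0}"
  proof
    fix w assume w: "w \<in> {w. sandwich u v s w \<noteq> 0}"
    then obtain m where m: "w = u @ m @ v"
      using sandwich_eq_0[of w u v s] by auto
    then show "w \<in> (\<lambda>m. u @ m @ v) ` {w. s w \<noteq> 0}"
      using w by (simp add: sandwich_append)
  qed
  then show ?thesis
    using \<open>finsupp s\<close> unfolding finsupp_def by (auto intro: finite_subset)
qed

lemma sandwich_Cons_Nil: "sandwich [c] [] y (d # w) = (if d = c then y w else 0)"
  unfolding sandwich_def by simp

lemma sandwich_Nil_snoc: "sandwich [] [c] y (w @ [d]) = (if d = c then y w else 0)"
  unfolding sandwich_def by simp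

lemma sandwich_Nil: "sandwich u v y [] = (if u = [] \<and> v = [] then y [] else 0)"
  unfolding sandwich_def by auto

lemma act_sandwich_Cons:
  fixes y :: "_ \<Rightarrow> 'k::field"
  assumes "finsupp y"
  shows "act X (sandwich [c] [] y) =
    (\<lambda>w. sandwich [c] [] (act X y) w + (\<Sum>d\<in>set (act_targets c). actl X c d * sandwich [d] [] y w))"
proof
  fix w'
  define S where "S = {w. y w \<noteq> 0}"
  have S: "finite S"
    using assms unfolding S_def finsupp_def .
  have "{w. sandwich [c] [] y w \<noteq> 0} \<subseteq> Cons c ` S"
  proof
    fix w assume "w \<in> {w. sandwich [c] [] y w \<noteq> 0}"
    then show "w \<in> Cons c ` S"
      unfolding S_def by (cases w) (auto simp: sandwich_Cons_Nil sandwich_Nil split: if_splits)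
  qed
  then have "act X (sandwich [c] [] y) w' = (\<Sum>w\<in>Cons c ` S. sandwich [c] [] y w * actw X w w')"
    using S by (intro act_eq_sum_superset) auto
  also have "\<dots> = (\<Sum>m\<in>S. y m * actw X (c # m) w')"
    by (simp add: sum.reindex sandwich_Cons_Nil)
  also have "\<dots> = sandwich [c] [] (act X y) w' + (\<Sum>d\<in>set (act_targets c). actl X c d * sandwich [d] [] y w')"
  proof (cases w')
    case Nil
    then show ?thesis by (simp add: actw_Nil_right sandwich_Nil)
  next
    case (Cons d w)
    have "(\<Sum>m\<in>S. y m * actw X (c # m) w')
        = (\<Sum>m\<in>S. if w = m then y m * actl X c d else 0) + (if d = c then \<Sum>m\<in>S. y m * actw X m w else 0)"
      unfolding Cons actw_Cons_Cons
      by (simp add: distrib_left sum.distrib if_distrib[of "\<lambda>x. _ * x"] cong: if_cong)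
    also have "(\<Sum>m\<in>S. if w = m then y m * actl X c d else 0) = y w * actl X c d"
      using S by (auto simp: sum.delta S_def)
    also have "(\<Sum>m\<in>S. y m * actw X m w) = act X y w"
      using S by (simp add: act_eq_sum_superset S_def)
    finally show ?thesis
      unfolding Cons
      by (simp add: sandwich_Cons_Nil sum_act_targets[of X c d "y w"] actl_eq_0_if_not_target if_distrib[of "\<lambda>x. _ * x"]
          mult.commute cong: if_cong)
  qed
  finally show "act X (sandwich [c] [] y) w' =
      sandwich [c] [] (act X y) w' + (\<Sum>d\<in>set (act_targets c). actl X c d * sandwich [d] [] y w')" .
qed

lemma act_sandwich_snoc:
  fixes y :: "_ \<Rightarrow> 'k::field"
  assumes "finsupp y"
  shows "act X (sandwich [] [c] y) =
    (\<lambda>w. sandwich [] [c] (act X y) w + (\<Sum>d\<in>set (act_targets c). actl X c d * sandwich [] [d] y w))"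
proof
  fix w'
  define S where "S = {w. y w \<noteq> 0}"
  have S: "finite S"
    using assms unfolding S_def finsupp_def .
  have "{w. sandwich [] [c] y w \<noteq> 0} \<subseteq> (\<lambda>m. m @ [c]) ` S"
  proof
    fix w assume "w \<in> {w. sandwich [] [c] y w \<noteq> 0}"
    then show "w \<in> (\<lambda>m. m @ [c]) ` S"
      unfolding S_def by (cases w rule: rev_exhaust) (auto simp: sandwich_Nil_snoc sandwich_Nil split: if_splits)
  qed
  then have "act X (sandwich [] [c] y) w' = (\<Sum>w\<in>(\<lambda>m. m @ [c]) ` S. sandwich [] [c] y w * actw X w w')"
    using S by (intro act_eq_sum_superset) auto
  also have "\<dots> = (\<Sum>m\<in>S. y m * actw X (m @ [c]) w')"
    by (simp add: sum.reindex inj_on_def sandwich_Nil_snoc)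
  also have "\<dots> = sandwich [] [c] (act X y) w' + (\<Sum>d\<in>set (act_targets c). actl X c d * sandwich [] [d] y w')"
  proof (cases w' rule: rev_exhaust)
    case Nil
    then show ?thesis by (simp add: actw_Nil_right sandwich_Nil)
  next
    case (snoc w d)
    have "(\<Sum>m\<in>S. y m * actw X (m @ [c]) w')
        = (\<Sum>m\<in>S. if w = m then y m * actl X c d else 0) + (if d = c then \<Sum>m\<in>S. y m * actw X m w else 0)"
      unfolding snoc actw_snoc_snoc
      by (simp add: distrib_left sum.distrib if_distrib[of "\<lambda>x. _ * x"] cong: if_cong)
    also have "(\<Sum>m\<in>S. if w = m then y m * actl X c d else 0) = y w * actl X c d"
      using S by (auto simp: sum.delta S_def)
    also have "(\<Sum>m\<in>S. y m * actw X m w) = act X y w"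
      using S by (simp add: act_eq_sum_superset S_def)
    finally show ?thesis
      unfolding snoc
      by (simp add: sandwich_Nil_snoc sum_act_targets[of X c d "y w"] actl_eq_0_if_not_target if_distrib[of "\<lambda>x. _ * x"]
          mult.commute cong: if_cong)
  qed
  finally show "act X (sandwich [] [c] y) w' =
      sandwich [] [c] (act X y) w' + (\<Sum>d\<in>set (act_targets c). actl X c d * sandwich [] [d] y w')" .
qed

lemma ideal_gen_add: "x \<in> ideal_gen I J S \<Longrightarrow> y \<in> ideal_gen I J S \<Longrightarrow> (\<lambda>w. x w + y w) \<in> ideal_gen I J S"
  unfolding ideal_gen_def by (rule lspan_add)

lemma ideal_gen_scale: "x \<in> ideal_gen I J S \<Longrightarrow> (\<lambda>w. a * x w) \<in> ideal_gen I J S"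
  unfolding ideal_gen_def by (rule lspan_scale)

lemma ideal_gen_diff: "x \<in> ideal_gen I J S \<Longrightarrow> y \<in> ideal_gen I J S \<Longrightarrow> (\<lambda>w. x w - y w) \<in> ideal_gen I J S"
  unfolding ideal_gen_def by (rule lspan_diff)

lemma ideal_gen_sum:
  "finite A \<Longrightarrow> (\<And>a. a \<in> A \<Longrightarrow> f a \<in> ideal_gen I J S) \<Longrightarrow> (\<lambda>w. \<Sum>a\<in>A. c a * f a w) \<in> ideal_gen I J S"
  unfolding ideal_gen_def by (rule lspan_sum)

lemma lspan_subset_ideal_gen: "A \<subseteq> ideal_gen I J S \<Longrightarrow> lspan A \<subseteq> ideal_gen I J S"
  unfolding ideal_gen_def by (rule lspan_subset_lspan)

lemma sandwich_mem_ideal_gen: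
  "s \<in> S \<Longrightarrow> set u \<subseteq> alphabet I J \<Longrightarrow> set v \<subseteq> alphabet I J \<Longrightarrow> sandwich u v s \<in> ideal_gen I J S"
  unfolding ideal_gen_def by (rule lspan_base) blast

lemma ideal_gen_base: "s \<in> S \<Longrightarrow> s \<in> ideal_gen I J S"
  using sandwich_mem_ideal_gen[of s S "[]" I J "[]"] by (simp add: sandwich_Nil_Nil)

lemma ideal_gen_sandwich:
  assumes "x \<in> ideal_gen I J S" "set u \<subseteq> alphabet I J" "set v \<subseteq> alphabet I J"
  shows "sandwich u v x \<in> ideal_gen I J S"
proof -
  obtain G c where G: "finite G" "x = (\<lambda>w. \<Sum>g\<in>G. c g * g w)"
    and gens: "G \<subseteq> {sandwich u v s | u v s. set u \<subseteq> alphabet I J \<and> set v \<subseteq> alphabet I J \<and> s \<in> S}"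
    using assms(1) unfolding ideal_gen_def lspan_def by blast
  have "sandwich u v g \<in> ideal_gen I J S" if "g \<in> G" for g
  proof -
    obtain u' v' s where "g = sandwich u' v' s" "set u' \<subseteq> alphabet I J" "set v' \<subseteq> alphabet I J" "s \<in> S"
      using gens \<open>g \<in> G\<close> by blast
    then show ?thesis
      using assms(2,3) by (simp add: sandwich_sandwich sandwich_mem_ideal_gen)
  qed
  then show ?thesis
    unfolding G(2) sandwich_sum using G(1) by (rule ideal_gen_sum[rotated])
qed

lemma ideal_gen_mono_Cons:
  "mono w \<in> ideal_gen I J S \<Longrightarrow> c \<in> alphabet I J \<Longrightarrow> mono (c # w) \<in> ideal_gen I J S"
  using ideal_gen_sandwich[of "mono w" I J S "[c]" "[]"] by (simp add: sandwich_mono)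

lemma ideal_gen_subset: "S \<subseteq> ideal_gen I J T \<Longrightarrow> ideal_gen I J S \<subseteq> ideal_gen I J T"
  unfolding ideal_gen_def[of I J S]
  by (rule lspan_subset_ideal_gen) (blast intro: ideal_gen_sandwich)

lemma act_sandwich_Nil_mem_ideal_gen:
  fixes S :: "(('i, 'j) letter list \<Rightarrow> 'k::field) set"
  assumes finsupp_S: "\<forall>s\<in>S. finsupp s" and act_S: "\<forall>s\<in>S. act X s \<in> ideal_gen I J S"
    and "s \<in> S" "set v \<subseteq> alphabet I J"
  shows "act X (sandwich [] v s) \<in> ideal_gen I J S"
  using assms(4)
proof (induction v rule: rev_induct)
  case Nil
  then show ?case using act_S \<open>s \<in> S\<close> by (simp add: sandwich_Nil_Nil)
next
  case (snoc c v)
  define y where "y = sandwich [] v s"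
  have c: "c \<in> alphabet I J" and v: "set v \<subseteq> alphabet I J"
    using snoc.prems by auto
  have "sandwich [] [c] (act X y) \<in> ideal_gen I J S"
    using snoc.IH[OF v] c by (intro ideal_gen_sandwich) (auto simp: y_def)
  moreover have "sandwich [] [d] y \<in> ideal_gen I J S" if "d \<in> set (act_targets c)" for d
    using \<open>s \<in> S\<close> v act_targets_alphabet[OF c that]
    by (auto simp: y_def sandwich_sandwich intro!: sandwich_mem_ideal_gen)
  moreover have "finsupp y"
    using finsupp_S \<open>s \<in> S\<close> by (simp add: y_def finsupp_sandwich)
  moreover have "sandwich [] (v @ [c]) s = sandwich [] [c] y"
    by (simp add: y_def sandwich_sandwich)
  ultimately show ?case
    by (simp add: act_sandwich_snoc ideal_gen_add ideal_gen_sum)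
qed

lemma act_sandwich_mem_ideal_gen:
  fixes S :: "(('i, 'j) letter list \<Rightarrow> 'k::field) set"
  assumes finsupp_S: "\<forall>s\<in>S. finsupp s" and act_S: "\<forall>s\<in>S. act X s \<in> ideal_gen I J S"
    and "s \<in> S" "set u \<subseteq> alphabet I J" "set v \<subseteq> alphabet I J"
  shows "act X (sandwich u v s) \<in> ideal_gen I J S"
  using assms(4)
proof (induction u)
  case Nil
  show ?case
    using act_sandwich_Nil_mem_ideal_gen[OF assms(1-3,5)] .
next
  case (Cons c u)
  define y where "y = sandwich u v s"
  have c: "c \<in> alphabet I J" and u: "set u \<subseteq> alphabet I J"
    using Cons.prems by auto
  have "sandwich [c] [] (act X y) \<in> ideal_gen I J S"
    using Cons.IH[OF u] c by (intro ideal_gen_sandwich) (auto simp: y_def)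
  moreover have "sandwich [d] [] y \<in> ideal_gen I J S" if "d \<in> set (act_targets c)" for d
    using \<open>s \<in> S\<close> u assms(5) act_targets_alphabet[OF c that]
    by (auto simp: y_def sandwich_sandwich intro!: sandwich_mem_ideal_gen)
  moreover have "finsupp y"
    using finsupp_S \<open>s \<in> S\<close> by (simp add: y_def finsupp_sandwich)
  moreover have "sandwich (c # u) v s = sandwich [c] [] y"
    by (simp add: y_def sandwich_sandwich)
  ultimately show ?case
    by (simp add: act_sandwich_Cons ideal_gen_add ideal_gen_sum)
qed

lemma ideal_gen_act:
  fixes S :: "(('i, 'j) letter list \<Rightarrow> 'k::field) set"
  assumes "\<forall>s\<in>S. finsupp s" "\<forall>s\<in>S. act X s \<in> ideal_gen I J S" "x \<in> ideal_gen I J S"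
  shows "act X x \<in> ideal_gen I J S"
  using assms(3) unfolding ideal_gen_def
proof (rule act_lspan[rotated 2])
  show "\<forall>b\<in>{sandwich u v s |u v s. set u \<subseteq> alphabet I J \<and> set v \<subseteq> alphabet I J \<and> s \<in> S}. finsupp b"
    using assms(1) by (auto intro: finsupp_sandwich)
  show "\<forall>b\<in>{sandwich u v s |u v s. set u \<subseteq> alphabet I J \<and> set v \<subseteq> alphabet I J \<and> s \<in> S}.
      act X b \<in> lspan {sandwich u v s |u v s. set u \<subseteq> alphabet I J \<and> set v \<subseteq> alphabet I J \<and> s \<in> S}"
    using act_sandwich_mem_ideal_gen[OF assms(1,2)] unfolding ideal_gen_def by blast
qed

lemma act_seq_mem_submod_gen: "s \<in> S \<Longrightarrow> act_seq xs s \<in> submod_gen S"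
  unfolding submod_gen_def by (rule lspan_base) blast

lemma finsupp_submod_gen: "\<forall>s\<in>S. finsupp (s :: _ \<Rightarrow> 'k::field) \<Longrightarrow> x \<in> submod_gen S \<Longrightarrow> finsupp x"
  unfolding submod_gen_def by (rule finsupp_lspan) (auto intro: finsupp_act_seq)

lemma submod_gen_act:
  assumes "\<forall>s\<in>S. finsupp (s :: _ \<Rightarrow> 'k::field)" "x \<in> submod_gen S"
  shows "act X x \<in> submod_gen S"
  using assms(2) unfolding submod_gen_def
proof (rule act_lspan[rotated 2])
  show "\<forall>b\<in>{act_seq xs s |xs s. s \<in> S}. finsupp b"
    using assms(1) by (auto intro: finsupp_act_seq)
  show "\<forall>b\<in>{act_seq xs s |xs s. s \<in> S}. act X b \<in> lspan {act_seq xs s |xs s. s \<in> S}"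
  proof
    fix b assume "b \<in> {act_seq xs s |xs s. s \<in> S}"
    then obtain xs s where "b = act_seq xs s" "s \<in> S" by blast
    then show "act X b \<in> lspan {act_seq xs s |xs s. s \<in> S}"
      using act_seq_mem_submod_gen[of s S "X # xs"] unfolding submod_gen_def act_seq_Cons by simp
  qed
qed

lemma ideal_gen_submod_gen_act_seq:
  assumes "\<forall>s\<in>S. finsupp (s :: _ \<Rightarrow> 'k::field)" "x \<in> ideal_gen I J (submod_gen S)"
  shows "act_seq xs x \<in> ideal_gen I J (submod_gen S)"
proof (induction xs)
  case Nil
  then show ?case using assms(2) by (simp add: act_seq_def)
next
  case (Cons X xs)
  have "\<forall>s\<in>submod_gen S. finsupp s"
    using assms(1) finsupp_submod_gen by blast
  moreover have "\<forall>s\<in>submod_gen S. act X s \<in> ideal_gen I J (submod_gen S)"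
    using assms(1) by (blast intro: submod_gen_act ideal_gen_base)
  ultimately show ?case
    using Cons.IH by (simp add: act_seq_Cons ideal_gen_act)
qed

fun half_weight_letter :: "('i, 'j) letter \<Rightarrow> int" where
  "half_weight_letter (Sc i) = 0"
| "half_weight_letter (E j) = 1"
| "half_weight_letter (H j) = 0"
| "half_weight_letter (F j) = -1"

definition half_weight :: "('i, 'j) letter list \<Rightarrow> int" where
  "half_weight w = sum_list (map half_weight_letter w)"

lemma half_weight_simps [simp]:
  "half_weight [] = 0"
  "half_weight (c # w) = half_weight_letter c + half_weight w"
  "half_weight (u @ w) = half_weight u + half_weight w"
  "half_weight (map Sc ks) = 0"
  by (simp_all add: half_weight_def comp_def)

lemma half_weight_letter_le_1: "half_weight_letter c \<le> 1"
  by (cases c) auto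

lemma half_weight_eq_0_if_Sc: "set w \<subseteq> range Sc \<Longrightarrow> half_weight w = 0"
  by (induction w) auto

lemma actw_Hop: "actw Hop w w' = (if w' = w then 2 * of_int (half_weight w) else (0::'k::field))"
proof (induction w arbitrary: w')
  case Nil
  then show ?case by (simp add: actw_Nil)
next
  case (Cons c m)
  have actl_Hop: "actl Hop c d = (if d = c then 2 * of_int (half_weight_letter c) else (0::'k))" for d
    by (cases c) auto
  show ?case
    using Cons.IH by (cases w') (auto simp: actw_Nil_right actw_Cons_Cons actl_Hop algebra_simps)
qed

lemma act_Hop:
  assumes "finsupp (v :: _ \<Rightarrow> 'k::field)"
  shows "act Hop v w = 2 * of_int (half_weight w) * v w"
proof -
  have S: "finite {w. v w \<noteq> 0}"
    using assms unfolding finsupp_def .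
  have "act Hop v w = (\<Sum>w0\<in>{w. v w \<noteq> 0}. v w0 * actw Hop w0 w)"
    by (rule act_eq_sum_superset[OF S]) simp
  also have "\<dots> = (\<Sum>w0\<in>{w. v w \<noteq> 0}. if w = w0 then v w0 * (2 * of_int (half_weight w0)) else 0)"
    by (rule sum.cong) (auto simp: actw_Hop)
  also have "\<dots> = 2 * of_int (half_weight w) * v w"
    using S by (auto simp: sum.delta)
  finally show ?thesis .
qed

section \<open>The submodule generated by \<open>e \<otimes> b \<otimes> T(L(0) \<otimes> A) \<otimes> e \<otimes> b'\<close>\<close>

lemma UNIV_sl2: "(UNIV :: sl2 set) = {Eop, Hop, Fop}"
  using sl2.exhaust by auto

instance sl2 :: finite
  by standard (simp add: UNIV_sl2)

fun adj_letter :: "sl2 \<Rightarrow> 'j \<Rightarrow> ('i, 'j) letter" where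
  "adj_letter Eop j = E j"
| "adj_letter Hop j = H j"
| "adj_letter Fop j = F j"

definition ad_coeff :: "sl2 \<Rightarrow> sl2 \<Rightarrow> sl2 \<Rightarrow> 'k::field" where
  "ad_coeff Z X Y = actl Z (adj_letter X () :: (unit, unit) letter) (adj_letter Y ())"

lemma actl_adj_letter:
  "actl Z (adj_letter X j) d = (\<Sum>Y\<in>UNIV. if d = adj_letter Y j then ad_coeff Z X Y else 0)"
  unfolding ad_coeff_def UNIV_sl2 by (cases Z; cases X; cases d) simp_all

definition bracket_word :: "'j \<Rightarrow> 'j \<Rightarrow> 'i list \<Rightarrow> sl2 \<Rightarrow> sl2 \<Rightarrow> ('i, 'j) letter list" where
  "bracket_word j j' ks X Y = adj_letter X j # map Sc ks @ [adj_letter Y j']"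

lemma bracket_word_eq_iff: "bracket_word j j' ks X Y = bracket_word j j' ks X' Y' \<longleftrightarrow> X = X' \<and> Y = Y'"
  unfolding bracket_word_def by (cases X; cases Y; cases X'; cases Y') simp_all

lemma actw_bracket_word:
  "(actw Z (bracket_word j j' ks X Y) w' :: 'k::field) =
     (\<Sum>X'\<in>UNIV. ad_coeff Z X X' * mono (bracket_word j j' ks X' Y) w')
   + (\<Sum>Y'\<in>UNIV. ad_coeff Z Y Y' * mono (bracket_word j j' ks X Y') w')"
proof (cases "length w' = length (bracket_word j j' ks X Y)")
  case False
  then have "(mono (bracket_word j j' ks X' Y') w' :: 'k) = 0" for X' Y'
    unfolding mono_def bracket_word_def by auto
  then show ?thesis
    using False by (simp add: actw_eq_0_if_length_neq)
next
  case True
  then obtain a r where ar: "w' = a # r"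
    unfolding bracket_word_def by (cases w') auto
  with True obtain ms b where "r = ms @ [b]"
    unfolding bracket_word_def by (cases r rule: rev_exhaust) auto
  with ar True have w': "w' = a # ms @ [b]" "length ms = length ks"
    unfolding bracket_word_def by auto
  have mono_eq: "(mono (bracket_word j j' ks X' Y') w' :: 'k)
      = (if a = adj_letter X' j \<and> ms = map Sc ks \<and> b = adj_letter Y' j' then 1 else 0)" for X' Y'
    unfolding w' bracket_word_def mono_def by auto
  have "actw Z (bracket_word j j' ks X Y) w' =
     (if ms = map Sc ks \<and> b = adj_letter Y j' then actl Z (adj_letter X j) a else 0) +
     (if a = adj_letter X j \<and> ms = map Sc ks then actl Z (adj_letter Y j') b else (0 :: 'k))"
    unfolding bracket_word_def w' actw_Cons_Cons append_Cons[symmetric] actw_snoc_snoc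
    by (simp add: actw_map_Sc)
  then show ?thesis
    unfolding mono_eq actl_adj_letter
    by (auto simp: if_distrib[of "\<lambda>x. _ * x"] cong: if_cong intro!: sum.cong)
qed

definition bracket_vec :: "'j \<Rightarrow> 'j \<Rightarrow> 'i list \<Rightarrow> (sl2 \<Rightarrow> sl2 \<Rightarrow> 'k::field) \<Rightarrow> (('i, 'j) letter list \<Rightarrow> 'k)" where
  "bracket_vec j j' ks c = (\<lambda>w. \<Sum>X\<in>UNIV. \<Sum>Y\<in>UNIV. c X Y * mono (bracket_word j j' ks X Y) w)"

definition tensor_act :: "sl2 \<Rightarrow> (sl2 \<Rightarrow> sl2 \<Rightarrow> 'k::field) \<Rightarrow> sl2 \<Rightarrow> sl2 \<Rightarrow> 'k" where
  "tensor_act Z c X' Y' = (\<Sum>X\<in>UNIV. c X Y' * ad_coeff Z X X') + (\<Sum>Y\<in>UNIV. c X' Y * ad_coeff Z Y Y')"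

lemma bracket_vec_bracket_word: "bracket_vec j j' ks c (bracket_word j j' ks X Y) = c X Y"
  unfolding bracket_vec_def mono_def bracket_word_eq_iff by (cases X; cases Y) (simp_all add: UNIV_sl2)

lemma bracket_vec_support:
  "{w. bracket_vec j j' ks c w \<noteq> 0} \<subseteq> (\<lambda>(X, Y). bracket_word j j' ks X Y) ` UNIV"
proof
  fix w assume "w \<in> {w. bracket_vec j j' ks c w \<noteq> 0}"
  then obtain X Y where "c X Y * mono (bracket_word j j' ks X Y) w \<noteq> 0"
    unfolding bracket_vec_def by (auto elim!: sum.not_neutral_contains_not_neutral)
  then show "w \<in> (\<lambda>(X, Y). bracket_word j j' ks X Y) ` UNIV"
    by (auto simp: mono_def split: if_splits)
qed

lemma act_bracket_vec: "act Z (bracket_vec j j' ks c) = bracket_vec j j' ks (tensor_act Z c)"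
proof
  fix w'
  have inj: "inj (\<lambda>(X, Y). bracket_word j j' ks X Y)"
    by (auto simp: inj_on_def bracket_word_eq_iff)
  have "act Z (bracket_vec j j' ks c) w'
      = (\<Sum>w\<in>(\<lambda>(X, Y). bracket_word j j' ks X Y) ` UNIV. bracket_vec j j' ks c w * actw Z w w')"
    by (rule act_eq_sum_superset[OF _ bracket_vec_support]) simp
  also have "\<dots> = (\<Sum>p\<in>UNIV. c (fst p) (snd p) * actw Z (bracket_word j j' ks (fst p) (snd p)) w')"
    by (subst sum.reindex[OF inj]) (auto simp: bracket_vec_bracket_word intro!: sum.cong)
  also have "\<dots> = (\<Sum>X\<in>UNIV. \<Sum>Y\<in>UNIV. c X Y * actw Z (bracket_word j j' ks X Y) w')"
    by (simp add: sum.cartesian_product split_beta)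
  also have "\<dots> = bracket_vec j j' ks (tensor_act Z c) w'"
    unfolding actw_bracket_word bracket_vec_def tensor_act_def UNIV_sl2
    by (simp add: algebra_simps)
  finally show "act Z (bracket_vec j j' ks c) w' = bracket_vec j j' ks (tensor_act Z c) w'" .
qed

text \<open>The coefficients of \<open>f\<^sup>n (e \<otimes> e)\<close> in \<open>L(2) \<otimes> L(2)\<close>.\<close>

definition lowering_coeff :: "nat \<Rightarrow> sl2 \<Rightarrow> sl2 \<Rightarrow> 'k::field" where
  "lowering_coeff n X Y =
    (if n = 0 then (if X = Eop \<and> Y = Eop then 1 else 0)
     else if n = 1 then (if (X = Hop \<and> Y = Eop) \<or> (X = Eop \<and> Y = Hop) then -1 else 0)
     else if n = 2 then (if X = Hop \<and> Y = Hop then 2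
       else if (X = Fop \<and> Y = Eop) \<or> (X = Eop \<and> Y = Fop) then -2 else 0)
     else if n = 3 then (if (X = Fop \<and> Y = Hop) \<or> (X = Hop \<and> Y = Fop) then 6 else 0)
     else if n = 4 then (if X = Fop \<and> Y = Fop then 24 else 0)
     else 0)"

lemma tensor_act_Fop_lowering_coeff:
  "tensor_act Fop (lowering_coeff n) = (lowering_coeff (Suc n) :: sl2 \<Rightarrow> sl2 \<Rightarrow> 'k::field)"
proof (intro ext)
  fix X Y
  consider "n = 0" | "n = 1" | "n = 2" | "n = 3" | "n = 4" | "n \<ge> 5" by linarith
  then show "tensor_act Fop (lowering_coeff n) X Y = (lowering_coeff (Suc n) X Y :: 'k)"
    by cases (cases X; cases Y; simp add: tensor_act_def lowering_coeff_def ad_coeff_def UNIV_sl2)+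
qed

lemma tensor_act_Eop_lowering_coeff_0: "tensor_act Eop (lowering_coeff 0) = (\<lambda>X Y. 0 :: 'k::field)"
  by (intro ext, simp add: tensor_act_def lowering_coeff_def ad_coeff_def UNIV_sl2 split: sl2.split)

definition lowering_comb :: "(nat \<Rightarrow> 'k::field) \<Rightarrow> sl2 \<Rightarrow> sl2 \<Rightarrow> 'k" where
  "lowering_comb a = (\<lambda>X Y. \<Sum>n<5. a n * lowering_coeff n X Y)"

text \<open>The action of \<open>f, h, e\<close> on the coordinates \<open>a\<close> of \<open>\<Sum> a\<^sub>n f\<^sup>n v\<close>, \<open>v\<close> of highest weight 4.\<close>

fun lowering_comb_act :: "sl2 \<Rightarrow> (nat \<Rightarrow> 'k::field) \<Rightarrow> nat \<Rightarrow> 'k" where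
  "lowering_comb_act Fop a n = (if n = 0 then 0 else a (n - 1))"
| "lowering_comb_act Hop a n = (4 - 2 * of_nat n) * a n"
| "lowering_comb_act Eop a n = of_nat ((n + 1) * (4 - n)) * a (n + 1)"

lemma tensor_act_lowering_comb: "tensor_act Z (lowering_comb a) = lowering_comb (lowering_comb_act Z a)"
proof (intro ext)
  have lessThan_5: "{..<5::nat} = {0, 1, 2, 3, 4}" by auto
  fix X Y
  show "tensor_act Z (lowering_comb a) X Y = lowering_comb (lowering_comb_act Z a) X Y"
    by (cases Z; cases X; cases Y; simp add: tensor_act_def lowering_comb_def lowering_coeff_def
        ad_coeff_def UNIV_sl2 lessThan_5 algebra_simps eval_nat_numeral)
qed

lemma mono_bracket_word_Eop_Eop: "mono (bracket_word j j' ks Eop Eop) = bracket_vec j j' ks (lowering_coeff 0)"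
  unfolding bracket_vec_def by (simp add: lowering_coeff_def UNIV_sl2)

lemma act_seq_Fop_bracket_word:
  "act_seq (replicate n Fop) (mono (bracket_word j j' ks Eop Eop)) = bracket_vec j j' ks (lowering_coeff n)"
  by (induction n) (simp_all add: act_seq_def mono_bracket_word_Eop_Eop act_bracket_vec tensor_act_Fop_lowering_coeff)

lemma act_seq_bracket_word_eq_lowering_comb:
  "\<exists>a::nat \<Rightarrow> 'k::field. act_seq xs (mono (bracket_word j j' ks Eop Eop)) = bracket_vec j j' ks (lowering_comb a)"
proof (induction xs)
  case Nil
  have "lowering_comb (\<lambda>n. if n = 0 then 1 else 0) = (lowering_coeff 0 :: _ \<Rightarrow> _ \<Rightarrow> 'k)"
    unfolding lowering_comb_def by (intro ext) (simp add: if_distrib[of "\<lambda>x. x * _"] cong: if_cong)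
  then show ?case
    by (intro exI[of _ "\<lambda>n. if n = 0 then 1 else 0"]) (simp add: act_seq_def mono_bracket_word_Eop_Eop)
next
  case (Cons X xs)
  then obtain a :: "nat \<Rightarrow> 'k" where "act_seq xs (mono (bracket_word j j' ks Eop Eop)) = bracket_vec j j' ks (lowering_comb a)"
    by blast
  then show ?case
    by (intro exI[of _ "lowering_comb_act X a"]) (simp add: act_seq_Cons act_bracket_vec tensor_act_lowering_comb)
qed

lemma bracket_vec_lowering_comb:
  "bracket_vec j j' ks (lowering_comb a) = (\<lambda>w. \<Sum>n<5. a n * bracket_vec j j' ks (lowering_coeff n) w)"
  unfolding bracket_vec_def lowering_comb_def
  by (simp add: sum_distrib_left sum_distrib_right mult.assoc sum.swap[of _ "{..<5}"])

lemma bracket_word_Eop_Eop_mem_bad_isotypic: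
  assumes "j \<in> J" "j' \<in> J" "set ks \<subseteq> I"
  shows "act_seq (replicate n Fop) (mono (bracket_word j j' ks Eop Eop)) \<in> (bad_isotypic I J :: (_ \<Rightarrow> 'k::field) set)"
proof -
  let ?g = "mono (bracket_word j j' ks Eop Eop) :: _ \<Rightarrow> 'k"
  have "?g \<in> TU I J"
    using assms unfolding TU_def mono_def bracket_word_def alphabet_def by auto
  moreover have "act Eop ?g = (\<lambda>w. 0)"
    unfolding mono_bracket_word_Eop_Eop act_bracket_vec tensor_act_Eop_lowering_coeff_0
    by (simp add: bracket_vec_def)
  moreover have "act Hop ?g = (\<lambda>w. of_nat 4 * ?g w)"
  proof
    fix w
    have "act Hop ?g w = 2 * of_int (half_weight w) * ?g w"
      by (rule act_Hop[OF finsupp_mono])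
    then show "act Hop ?g w = of_nat 4 * ?g w"
      by (simp add: mono_def bracket_word_def)
  qed
  ultimately have "\<exists>n' v m. act_seq (replicate n Fop) ?g = act_seq (replicate n' Fop) v \<and> v \<in> TU I J
      \<and> m \<noteq> 0 \<and> m \<noteq> 2 \<and> act Eop v = (\<lambda>w. 0) \<and> act Hop v = (\<lambda>w. of_nat m * v w)"
    by (intro exI[of _ n] exI[of _ ?g] exI[of _ "4::nat"]) simp
  then show ?thesis
    unfolding bad_isotypic_def by (intro lspan_base CollectI)
qed

lemma submod_gen_eBTAeB_subset_bad_isotypic:
  "submod_gen (eBTAeB I J) \<subseteq> (bad_isotypic I J :: (_ \<Rightarrow> 'k::field) set)"
proof -
  have "act_seq xs s \<in> bad_isotypic I J" if gen: "s \<in> eBTAeB I J" for xs and s :: "_ \<Rightarrow> 'k"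
  proof -
    obtain j j' ks where s: "s = mono (bracket_word j j' ks Eop Eop)" "j \<in> J" "j' \<in> J" "set ks \<subseteq> I"
      using gen unfolding eBTAeB_def bracket_word_def by auto
    obtain a :: "nat \<Rightarrow> 'k" where "act_seq xs s = bracket_vec j j' ks (lowering_comb a)"
      unfolding s(1) using act_seq_bracket_word_eq_lowering_comb[of xs j j' ks] by (elim exE)
    also have "\<dots> = (\<lambda>w. \<Sum>n<5. a n * act_seq (replicate n Fop) s w)"
      unfolding s(1) bracket_vec_lowering_comb act_seq_Fop_bracket_word ..
    also have "\<dots> \<in> bad_isotypic I J"
      using bracket_word_Eop_Eop_mem_bad_isotypic[OF s(2-4)]
      unfolding s(1) bad_isotypic_def by (intro lspan_sum) auto
    finally show ?thesis .
  qed
  then have "{act_seq xs s | xs s. s \<in> eBTAeB I J} \<subseteq> (bad_isotypic I J :: (_ \<Rightarrow> 'k) set)"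
    by blast
  then show ?thesis
    unfolding submod_gen_def bad_isotypic_def by (rule lspan_subset_lspan)
qed

section \<open>Monomials of weight at least four\<close>

abbreviation eB_ideal :: "'i set \<Rightarrow> 'j set \<Rightarrow> (('i, 'j) letter list \<Rightarrow> 'k::field) set" where
  "eB_ideal I J \<equiv> ideal_gen I J (submod_gen (eBTAeB I J))"

lemma sandwich_Nil_bracket_vec:
  "sandwich [] t (bracket_vec j j' ks c) =
    (\<lambda>w. \<Sum>X\<in>UNIV. \<Sum>Y\<in>UNIV. c X Y * mono (bracket_word j j' ks X Y @ t) w)"
proof
  fix w
  show "sandwich [] t (bracket_vec j j' ks c) w =
      (\<Sum>X\<in>UNIV. \<Sum>Y\<in>UNIV. c X Y * mono (bracket_word j j' ks X Y @ t) w)"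
    by (cases "\<exists>m. w = m @ t")
      (auto simp: sandwich_append[of "[]", simplified] sandwich_eq_0 bracket_vec_def mono_def)
qed

lemma lowered_bracket_mem_eB_ideal:
  assumes "j \<in> J" "j' \<in> J" "set ks \<subseteq> I" "set t \<subseteq> alphabet I J"
  shows "sandwich [] t (bracket_vec j j' ks (lowering_coeff n)) \<in> (eB_ideal I J :: (_ \<Rightarrow> 'k::field) set)"
proof -
  have "mono (bracket_word j j' ks Eop Eop) \<in> (eBTAeB I J :: (_ \<Rightarrow> 'k) set)"
    using assms(1-3) unfolding eBTAeB_def bracket_word_def by auto
  then have "act_seq (replicate n Fop) (mono (bracket_word j j' ks Eop Eop)) \<in> (submod_gen (eBTAeB I J) :: (_ \<Rightarrow> 'k) set)"
    by (rule act_seq_mem_submod_gen)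
  then show ?thesis
    unfolding act_seq_Fop_bracket_word using assms(4)
    by (intro ideal_gen_sandwich ideal_gen_base) auto
qed

lemma E_Sc_E_mem_eB_ideal:
  assumes "j \<in> J" "j' \<in> J" "set ks \<subseteq> I" "set t \<subseteq> alphabet I J"
  shows "mono (E j # map Sc ks @ E j' # t) \<in> (eB_ideal I J :: (_ \<Rightarrow> 'k::field) set)"
  using lowered_bracket_mem_eB_ideal[OF assms, of 0]
  by (simp add: sandwich_Nil_bracket_vec lowering_coeff_def UNIV_sl2 bracket_word_def)

lemma E_Sc_H_relation:
  assumes "j \<in> J" "j' \<in> J" "set ks \<subseteq> I" "set t \<subseteq> alphabet I J"
  shows "(\<lambda>w. mono (E j # map Sc ks @ H j' # t) w + mono (H j # map Sc ks @ E j' # t) w)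
    \<in> (eB_ideal I J :: (_ \<Rightarrow> 'k::field) set)"
  using ideal_gen_scale[OF lowered_bracket_mem_eB_ideal[OF assms, of 1], of "-1"]
  by (simp add: sandwich_Nil_bracket_vec lowering_coeff_def UNIV_sl2 bracket_word_def add.commute)

lemma E_Sc_F_relation:
  assumes "j \<in> J" "j' \<in> J" "set ks \<subseteq> I" "set t \<subseteq> alphabet I J"
  shows "(\<lambda>w. mono (E j # map Sc ks @ F j' # t) w + mono (F j # map Sc ks @ E j' # t) w
      - mono (H j # map Sc ks @ H j' # t) w) \<in> (eB_ideal I J :: (_ \<Rightarrow> 'k::field_char_0) set)"
  using ideal_gen_scale[OF lowered_bracket_mem_eB_ideal[OF assms, of 2], of "-1/2 :: 'k"]
  by (simp add: sandwich_Nil_bracket_vec lowering_coeff_def UNIV_sl2 bracket_word_def algebra_simps)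

lemma split_Sc_prefix: "\<not> set w \<subseteq> range Sc \<Longrightarrow> \<exists>ks z t. w = map Sc ks @ z # t \<and> z \<notin> range Sc"
proof (induction w)
  case Nil
  then show ?case by simp
next
  case (Cons c w)
  show ?case
  proof (cases "c \<in> range Sc")
    case True
    then obtain i where "c = Sc i" by blast
    moreover obtain ks z t where "w = map Sc ks @ z # t" "z \<notin> range Sc"
      using Cons True by auto
    ultimately show ?thesis
      by (intro exI[of _ "i # ks"] exI[of _ z] exI[of _ t]) simp
  next
    case False
    then show ?thesis
      by (intro exI[of _ "[]"]) auto
  qed
qed

text \<open>The relations \<open>f g\<close> and \<open>f\<^sup>2 g\<close>, \<open>g = e b \<otimes> a \<otimes> e b'\<close>, trade the leading \<open>e b\<close> of the word
  for \<open>h b\<close> or \<open>f b\<close>, and the remaining tail then has half weight at least 2.\<close>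

lemma E_Sc_mem_eB_ideal:
  fixes I :: "'i set" and J :: "'j set"
  assumes "j \<in> J" "set ks \<subseteq> I" "z \<in> alphabet I J" "z \<notin> range Sc" "set t \<subseteq> alphabet I J"
    and "half_weight (z # t) = 1"
    and IH: "\<And>u. set u \<subseteq> alphabet I J \<Longrightarrow> length u = Suc (length ks + length t) \<Longrightarrow> 2 \<le> half_weight u
      \<Longrightarrow> mono u \<in> (eB_ideal I J :: (_ \<Rightarrow> 'k::field_char_0) set)"
  shows "mono (E j # map Sc ks @ z # t) \<in> (eB_ideal I J :: (_ \<Rightarrow> 'k) set)"
proof -
  have Sc_ks: "set (map Sc ks) \<subseteq> alphabet I J"
    using assms(2) by (auto simp: alphabet_def)
  have tail_mem: "mono (c # map Sc ks @ d # t) \<in> (eB_ideal I J :: (_ \<Rightarrow> 'k) set)"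
    if "c \<in> alphabet I J" "d \<in> alphabet I J" "2 \<le> half_weight_letter d + half_weight t" for c d
    using that Sc_ks assms(5) by (intro ideal_gen_mono_Cons IH) auto
  obtain j' where j': "j' \<in> J" "z = E j' \<or> z = H j' \<or> z = F j'"
    using assms(3,4) unfolding alphabet_def by auto
  then consider "z = E j'" | "z = H j'" | "z = F j'"
    by blast
  then show ?thesis
  proof cases
    case 1
    then show ?thesis
      using E_Sc_E_mem_eB_ideal[OF assms(1) j'(1) assms(2,5)] by simp
  next
    case 2
    have "mono (H j # map Sc ks @ E j' # t) \<in> (eB_ideal I J :: (_ \<Rightarrow> 'k) set)"
      using 2 assms(1,6) j'(1) by (intro tail_mem) (auto simp: alphabet_def)
    from ideal_gen_diff[OF E_Sc_H_relation[OF assms(1) j'(1) assms(2,5)] this]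
    show ?thesis using 2 by simp
  next
    case 3
    have HH: "mono (H j # map Sc ks @ H j' # t) \<in> (eB_ideal I J :: (_ \<Rightarrow> 'k) set)"
      and FE: "mono (F j # map Sc ks @ E j' # t) \<in> (eB_ideal I J :: (_ \<Rightarrow> 'k) set)"
      using 3 assms(1,6) j'(1) by (auto simp: alphabet_def intro!: tail_mem)
    from ideal_gen_add[OF ideal_gen_diff[OF E_Sc_F_relation[OF assms(1) j'(1) assms(2,5)] FE] HH]
    show ?thesis using 3 by simp
  qed
qed

lemma mono_mem_eB_ideal:
  fixes I :: "'i set" and J :: "'j set"
  assumes "set w \<subseteq> alphabet I J" "2 \<le> half_weight w"
  shows "mono w \<in> (eB_ideal I J :: (_ \<Rightarrow> 'k::field_char_0) set)"
  using assms
proof (induction "length w" arbitrary: w rule: less_induct)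
  case less
  then obtain c w1 where w: "w = c # w1"
    by (cases w) auto
  have c: "c \<in> alphabet I J" and w1: "set w1 \<subseteq> alphabet I J"
    using less.prems w by auto
  show ?case
  proof (cases "2 \<le> half_weight w1")
    case True
    then show ?thesis
      using less w w1 c by (auto intro: ideal_gen_mono_Cons)
  next
    case False
    then have "half_weight_letter c = 1" "half_weight w1 = 1"
      using less.prems(2) w half_weight_letter_le_1[of c] by auto
    then obtain j where j: "c = E j" "j \<in> J"
      using c by (cases c) (auto simp: alphabet_def)
    have "\<not> set w1 \<subseteq> range Sc"
      using \<open>half_weight w1 = 1\<close> half_weight_eq_0_if_Sc by fastforce
    then obtain ks z t where w1_eq: "w1 = map Sc ks @ z # t" "z \<notin> range Sc"
      using split_Sc_prefix by blast
    have "set ks \<subseteq> I"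
      using w1 w1_eq(1) by (auto simp: alphabet_def)
    moreover have "z \<in> alphabet I J" "set t \<subseteq> alphabet I J"
      using w1 w1_eq(1) by auto
    ultimately show ?thesis
      unfolding w j(1) w1_eq(1)
      using \<open>half_weight w1 = 1\<close> w1_eq less.hyps w
      by (intro E_Sc_mem_eB_ideal j(2)) auto
  qed
qed

lemma weight_vector_mem_eB_ideal:
  fixes v :: "('i, 'j) letter list \<Rightarrow> 'k::field_char_0"
  assumes "v \<in> TU I J" "m \<noteq> 0" "m \<noteq> 2" "act Hop v = (\<lambda>w. of_nat m * v w)"
  shows "v \<in> eB_ideal I J"
proof -
  have S: "finite {w. v w \<noteq> 0}"
    using assms(1) unfolding TU_def by auto
  have "mono w \<in> (eB_ideal I J :: (_ \<Rightarrow> 'k) set)" if "v w \<noteq> 0" for w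
  proof (rule mono_mem_eB_ideal)
    show "set w \<subseteq> alphabet I J"
      using assms(1) that unfolding TU_def by auto
    have "2 * of_int (half_weight w) * v w = of_nat m * v w"
      using act_Hop[of v w] S assms(4) unfolding finsupp_def by metis
    then have "2 * half_weight w = int m"
      using that by (metis mult_cancel_right of_int_eq_iff of_int_mult of_int_numeral of_int_of_nat_eq)
    then show "2 \<le> half_weight w"
      using assms(2,3) by presburger
  qed
  then have "(\<lambda>x. \<Sum>w\<in>{w. v w \<noteq> 0}. v w * mono w x) \<in> eB_ideal I J"
    using S by (intro ideal_gen_sum) auto
  then show ?thesis
    by (subst fun_eq_sum_mono[OF S order_refl])
qed

lemma bad_isotypic_subset_eB_ideal:
  "(bad_isotypic I J :: (_ \<Rightarrow> 'k::field_char_0) set) \<subseteq> eB_ideal I J"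
proof -
  have "act_seq (replicate n Fop) v \<in> eB_ideal I J"
    if "v \<in> TU I J" "m \<noteq> 0" "m \<noteq> 2" "act Hop v = (\<lambda>w. of_nat m * v w)" for n m and v :: "_ \<Rightarrow> 'k"
    using weight_vector_mem_eB_ideal[OF that]
    by (rule ideal_gen_submod_gen_act_seq[rotated]) (auto simp: eBTAeB_def finsupp_mono)
  then show ?thesis
    unfolding bad_isotypic_def by (intro lspan_subset_ideal_gen) blast
qed

theorem proposition4p1:
  fixes I :: "'i set" and J :: "'j set"
  shows "(ideal_gen I J (bad_isotypic I J) :: (('i, 'j) letter list \<Rightarrow> 'k::field_char_0) set)
         = ideal_gen I J (submod_gen (eBTAeB I J))"
proof
  show "ideal_gen I J (bad_isotypic I J) \<subseteq> (eB_ideal I J :: (_ \<Rightarrow> 'k) set)"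
    by (rule ideal_gen_subset[OF bad_isotypic_subset_eB_ideal])
  show "eB_ideal I J \<subseteq> (ideal_gen I J (bad_isotypic I J) :: (_ \<Rightarrow> 'k) set)"
    using submod_gen_eBTAeB_subset_bad_isotypic ideal_gen_base by (intro ideal_gen_subset) blast
qed

end
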